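(* Let $\varepsilon_{\mathrm{opt}}<\epsilon$ and $b'=b-\frac{\epsilon-\varepsilon_{\mathrm{opt}}}{2}$. Let $\bar\pi$ be a policy with $\hat V^{\bar\pi}_{r_p}(\rho)\ge\hat V^{\hat\pi^*}_{r_p}(\rho)-\varepsilon_{\mathrm{opt}}$ and $\hat V^{\bar\pi}_c(\rho)\ge b'-\varepsilon_{\mathrm{opt}}$ (e.g. the output $\bar\pi_T$ of the primal-dual algorithm under the conditions of its guarantee). Suppose $$|V^{\bar\pi}_c(\rho)-\hat V^{\bar\pi}_c(\rho)|\le\tfrac{\epsilon-\varepsilon_{\mathrm{opt}}}{2},\quad|V^{\pi^*}_c(\rho)-\hat V^{\pi^*}_c(\rho)|\le\tfrac{\epsilon-\varepsilon_{\mathrm{opt}}}{2},\quad|\hat V^{\pi^*_c}_c(\rho)-V^{\pi^*_c}_c(\rho)|\le\tfrac{\zeta}{4}.$$ Then (a) $V^{\bar\pi}_c(\rho)\ge b-\epsilon$, and (b) $$V^{\pi^*}_r(\rho)-V^{\bar\pi}_r(\rho)\le\frac{2\omega}{1-\gamma}+\varepsilon_{\mathrm{opt}}+|V^{\pi^*}_{r_p}(\rho)-\hat V^{\pi^*}_{r_p}(\rho)|+|\hat V^{\bar\pi}_{r_p}(\rho)-V^{\bar\pi}_{r_p}(\rho)|.$$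
   Context: A discounted CMDP $M=\langle\mathcal S,\mathcal A,\mathcal P,r,c,b,\rho,\gamma\rangle$ with finite state and action sets, reward $r:\mathcal S\times\mathcal A\to[0,1]$, constraint reward $c:\mathcal S\times\mathcal A\to[0,1]$, threshold $b$, initial distribution $\rho$, discount $\gamma\in[0,1)$. $V^\pi_g(\rho)$ is the discounted value of policy $\pi$ for reward $g$ under $\mathcal P$, $s_0\sim\rho$; hats denote values under an empirical kernel $\hat{\mathcal P}$. $r_p=r+\xi$ with $\xi(s,a)\in[0,\omega]$. $\pi^*$ is an optimal policy of $\max_\pi V^\pi_r(\rho)$ s.t. $V^\pi_c(\rho)\ge b$; $\hat\pi^*$ is an optimal policy of $\max_\pi\hat V^\pi_{r_p}(\rho)$ s.t. $\hat V^\pi_c(\rho)\ge b'$. Slater constant $\zeta=\max_\pi V^\pi_c(\rho)-b$; $\pi^*_c\in\arg\max_\pi V^\pi_c(\rho)$. *)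

theory Defs
  imports "HOL-Analysis.Analysis"
begin

definition is_dist :: "('x::finite \<Rightarrow> real) \<Rightarrow> bool" where
  "is_dist d \<longleftrightarrow> (\<forall>x. 0 \<le> d x) \<and> sum d UNIV = 1"

(* Stationary stochastic policies pi(a|s) = pi s a *)
definition is_policy :: "('s::finite \<Rightarrow> 'a::finite \<Rightarrow> real) \<Rightarrow> bool" where
  "is_policy \<pi> \<longleftrightarrow> (\<forall>s. is_dist (\<pi> s))"

(* Transition kernels P(s'|s,a) = P s a s' *)
definition is_kernel :: "('s::finite \<Rightarrow> 'a::finite \<Rightarrow> 's \<Rightarrow> real) \<Rightarrow> bool" where
  "is_kernel P \<longleftrightarrow> (\<forall>s a. is_dist (P s a))"

fun state_dist :: "('s::finite \<Rightarrow> 'a::finite \<Rightarrow> 's \<Rightarrow> real) \<Rightarrow> ('s \<Rightarrow> 'a \<Rightarrow> real)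
                   \<Rightarrow> ('s \<Rightarrow> real) \<Rightarrow> nat \<Rightarrow> 's \<Rightarrow> real" where
  "state_dist P \<pi> \<rho> 0 = \<rho>"
| "state_dist P \<pi> \<rho> (Suc t) =
     (\<lambda>s'. \<Sum>s\<in>UNIV. \<Sum>a\<in>UNIV. state_dist P \<pi> \<rho> t s * \<pi> s a * P s a s')"

definition val :: "('s::finite \<Rightarrow> 'a::finite \<Rightarrow> 's \<Rightarrow> real) \<Rightarrow> real \<Rightarrow> ('s \<Rightarrow> real)
                   \<Rightarrow> ('s \<Rightarrow> 'a \<Rightarrow> real) \<Rightarrow> ('s \<Rightarrow> 'a \<Rightarrow> real) \<Rightarrow> real" where
  "val P \<gamma> \<rho> \<pi> g =
     (\<Sum>t. \<gamma> ^ t * (\<Sum>s\<in>UNIV. \<Sum>a\<in>UNIV. state_dist P \<pi> \<rho> t s * \<pi> s a * g s a))"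

definition cmdp_optimal ::
  "('s::finite \<Rightarrow> 'a::finite \<Rightarrow> 's \<Rightarrow> real) \<Rightarrow> real \<Rightarrow> ('s \<Rightarrow> real)
   \<Rightarrow> ('s \<Rightarrow> 'a \<Rightarrow> real) \<Rightarrow> ('s \<Rightarrow> 'a \<Rightarrow> real) \<Rightarrow> real \<Rightarrow> ('s \<Rightarrow> 'a \<Rightarrow> real) \<Rightarrow> bool" where
  "cmdp_optimal P \<gamma> \<rho> r c b \<pi> \<longleftrightarrow>
     is_policy \<pi> \<and> val P \<gamma> \<rho> \<pi> c \<ge> b \<and>
     (\<forall>\<pi>'. is_policy \<pi>' \<and> val P \<gamma> \<rho> \<pi>' c \<ge> b \<longrightarrow> val P \<gamma> \<rho> \<pi>' r \<le> val P \<gamma> \<rho> \<pi> r)"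

definition mdp_optimal ::
  "('s::finite \<Rightarrow> 'a::finite \<Rightarrow> 's \<Rightarrow> real) \<Rightarrow> real \<Rightarrow> ('s \<Rightarrow> real)
   \<Rightarrow> ('s \<Rightarrow> 'a \<Rightarrow> real) \<Rightarrow> ('s \<Rightarrow> 'a \<Rightarrow> real) \<Rightarrow> bool" where
  "mdp_optimal P \<gamma> \<rho> g \<pi> \<longleftrightarrow>
     is_policy \<pi> \<and> (\<forall>\<pi>'. is_policy \<pi>' \<longrightarrow> val P \<gamma> \<rho> \<pi>' g \<le> val P \<gamma> \<rho> \<pi> g)"

end

theory Submission
  imports Defs
begin

text \<open>The true optimum \<pi>* satisfies V_c \<ge> b, and its empirical constraint value is off by
  at most b - b', so \<pi>* is feasible for the empirical problem. Hence its empirical r_p-value is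
  at most that of the empirical optimum, which \<pi>bar matches up to \<epsilon>_opt. Passing between
  empirical and true values costs the two absolute differences, and since
  V_{r_p} = V_r + V_\<xi> with 0 \<le> V_\<xi> \<le> \<omega>/(1-\<gamma>), dropping the perturbation costs at most
  \<omega>/(1-\<gamma>). Part (a) is the same margin argument applied to \<pi>bar.\<close>

definition expected_reward ::
  "('s::finite \<Rightarrow> 'a::finite \<Rightarrow> 's \<Rightarrow> real) \<Rightarrow> ('s \<Rightarrow> real) \<Rightarrow> ('s \<Rightarrow> 'a \<Rightarrow> real)
   \<Rightarrow> ('s \<Rightarrow> 'a \<Rightarrow> real) \<Rightarrow> nat \<Rightarrow> real" where
  "expected_reward P \<rho> \<pi> g t =
     (\<Sum>s\<in>UNIV. \<Sum>a\<in>UNIV. state_dist P \<pi> \<rho> t s * \<pi> s a * g s a)"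

lemma val_eq_suminf_expected_reward:
  "val P \<gamma> \<rho> \<pi> g = (\<Sum>t. \<gamma> ^ t * expected_reward P \<rho> \<pi> g t)"
  by (simp add: val_def expected_reward_def)

lemma is_dist_state_dist:
  assumes "is_kernel P" "is_policy \<pi>" "is_dist \<rho>"
  shows "is_dist (state_dist P \<pi> \<rho> t)"
proof (induction t)
  case 0
  then show ?case using assms by simp
next
  case (Suc t)
  let ?d = "state_dist P \<pi> \<rho> t"
  have nonneg: "\<forall>s'. 0 \<le> state_dist P \<pi> \<rho> (Suc t) s'"
    using Suc assms unfolding is_dist_def is_kernel_def is_policy_def
    by (auto intro!: sum_nonneg mult_nonneg_nonneg)
  have "sum (state_dist P \<pi> \<rho> (Suc t)) UNIV
      = (\<Sum>s\<in>UNIV. \<Sum>a\<in>UNIV. ?d s * \<pi> s a * (\<Sum>s'\<in>UNIV. P s a s'))"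
  proof -
    have "sum (state_dist P \<pi> \<rho> (Suc t)) UNIV
        = (\<Sum>s'\<in>UNIV. \<Sum>s\<in>UNIV. \<Sum>a\<in>UNIV. ?d s * \<pi> s a * P s a s')"
      by simp
    also have "\<dots> = (\<Sum>s\<in>UNIV. \<Sum>s'\<in>UNIV. \<Sum>a\<in>UNIV. ?d s * \<pi> s a * P s a s')"
      by (rule sum.swap)
    also have "\<dots> = (\<Sum>s\<in>UNIV. \<Sum>a\<in>UNIV. \<Sum>s'\<in>UNIV. ?d s * \<pi> s a * P s a s')"
      by (rule sum.cong[OF refl], rule sum.swap)
    finally show ?thesis by (simp add: sum_distrib_left)
  qed
  also have "\<dots> = (\<Sum>s\<in>UNIV. ?d s * (\<Sum>a\<in>UNIV. \<pi> s a))"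
    using assms(1) unfolding is_kernel_def is_dist_def by (simp add: sum_distrib_left)
  also have "\<dots> = 1"
    using assms(2) Suc unfolding is_policy_def is_dist_def by simp
  finally show ?case using nonneg unfolding is_dist_def by simp
qed

lemma expected_reward_const:
  assumes "is_kernel P" "is_policy \<pi>" "is_dist \<rho>"
  shows "expected_reward P \<rho> \<pi> (\<lambda>_ _. M) t = M"
proof -
  have "expected_reward P \<rho> \<pi> (\<lambda>_ _. M) t
      = (\<Sum>s\<in>UNIV. state_dist P \<pi> \<rho> t s * (\<Sum>a\<in>UNIV. \<pi> s a)) * M"
    by (simp add: expected_reward_def sum_distrib_left sum_distrib_right)
  then show ?thesis
    using is_dist_state_dist[OF assms, of t] assms(2) unfolding is_dist_def is_policy_def by simp
qed

lemma expected_reward_mono: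
  assumes "is_kernel P" "is_policy \<pi>" "is_dist \<rho>" "\<And>s a. g s a \<le> h s a"
  shows "expected_reward P \<rho> \<pi> g t \<le> expected_reward P \<rho> \<pi> h t"
  using is_dist_state_dist[OF assms(1-3), of t] assms(2,4)
  unfolding expected_reward_def is_dist_def is_policy_def
  by (auto intro!: sum_mono mult_left_mono)

lemma abs_expected_reward_le:
  assumes "is_kernel P" "is_policy \<pi>" "is_dist \<rho>" "\<And>s a. \<bar>g s a\<bar> \<le> M"
  shows "\<bar>expected_reward P \<rho> \<pi> g t\<bar> \<le> M"
proof -
  have "expected_reward P \<rho> \<pi> g t \<le> M"
    using expected_reward_mono[OF assms(1-3), of g "\<lambda>_ _. M"] assms(4)
    by (simp add: expected_reward_const[OF assms(1-3)] abs_le_iff)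
  moreover have "- M \<le> g s a" for s a
    using assms(4)[of s a] by linarith
  then have "- M \<le> expected_reward P \<rho> \<pi> g t"
    using expected_reward_mono[OF assms(1-3), of "\<lambda>_ _. - M" g]
    by (simp add: expected_reward_const[OF assms(1-3)])
  ultimately show ?thesis by simp
qed

text \<open>Over finite state and action spaces every reward is bounded, so the value series always
  converges.\<close>
lemma summable_expected_reward:
  assumes "is_kernel P" "is_policy \<pi>" "is_dist \<rho>" "0 \<le> \<gamma>" "\<gamma> < 1"
  shows "summable (\<lambda>t. \<gamma> ^ t * expected_reward P \<rho> \<pi> g t)"
proof (rule summable_comparison_test)
  define M where "M = (\<Sum>s\<in>UNIV. \<Sum>a\<in>UNIV. \<bar>g s a\<bar>)"
  have "\<bar>g s a\<bar> \<le> M" for s a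
  proof -
    have "\<bar>g s a\<bar> \<le> (\<Sum>a\<in>UNIV. \<bar>g s a\<bar>)"
      by (rule member_le_sum) auto
    also have "\<dots> \<le> M"
      unfolding M_def by (rule member_le_sum[of s UNIV "\<lambda>s. \<Sum>a\<in>UNIV. \<bar>g s a\<bar>"]) (auto intro: sum_nonneg)
    finally show ?thesis .
  qed
  then have "\<bar>expected_reward P \<rho> \<pi> g t\<bar> \<le> M" for t
    by (rule abs_expected_reward_le[OF assms(1-3)])
  then show "\<exists>N. \<forall>t\<ge>N. norm (\<gamma> ^ t * expected_reward P \<rho> \<pi> g t) \<le> M * \<gamma> ^ t"
    using assms(4) by (auto simp: abs_mult mult.commute[of M] intro!: exI[of _ 0] mult_left_mono)
  show "summable (\<lambda>t. M * \<gamma> ^ t)"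
    using assms(4,5) by (intro summable_mult summable_geometric) simp
qed

lemma val_add:
  assumes "is_kernel P" "is_policy \<pi>" "is_dist \<rho>" "0 \<le> \<gamma>" "\<gamma> < 1"
  shows "val P \<gamma> \<rho> \<pi> (\<lambda>s a. g s a + h s a) = val P \<gamma> \<rho> \<pi> g + val P \<gamma> \<rho> \<pi> h"
  unfolding val_eq_suminf_expected_reward
  by (subst suminf_add[OF summable_expected_reward[OF assms] summable_expected_reward[OF assms]])
    (simp add: expected_reward_def algebra_simps sum.distrib)

lemma val_nonneg:
  assumes "is_kernel P" "is_policy \<pi>" "is_dist \<rho>" "0 \<le> \<gamma>" "\<gamma> < 1" "\<And>s a. 0 \<le> g s a"
  shows "0 \<le> val P \<gamma> \<rho> \<pi> g"
proof -
  have "expected_reward P \<rho> \<pi> (\<lambda>_ _. 0) t \<le> expected_reward P \<rho> \<pi> g t" for t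
    by (rule expected_reward_mono[OF assms(1-3) assms(6)])
  then show ?thesis
    unfolding val_eq_suminf_expected_reward using assms(4)
    by (intro suminf_nonneg[OF summable_expected_reward[OF assms(1-5)]])
      (simp add: expected_reward_const[OF assms(1-3)])
qed

lemma val_le:
  assumes "is_kernel P" "is_policy \<pi>" "is_dist \<rho>" "0 \<le> \<gamma>" "\<gamma> < 1" "\<And>s a. g s a \<le> M"
  shows "val P \<gamma> \<rho> \<pi> g \<le> M / (1 - \<gamma>)"
proof -
  have geometric: "(\<lambda>t. \<gamma> ^ t * M) sums (M / (1 - \<gamma>))"
    using sums_mult2[OF geometric_sums, of \<gamma> M] assms(4,5) by simp
  have "expected_reward P \<rho> \<pi> g t \<le> M" for t
    using expected_reward_mono[OF assms(1-3), of g "\<lambda>_ _. M" t] assms(6)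
    by (simp add: expected_reward_const[OF assms(1-3)])
  then have "val P \<gamma> \<rho> \<pi> g \<le> (\<Sum>t. \<gamma> ^ t * M)"
    unfolding val_eq_suminf_expected_reward using assms(4)
    by (intro suminf_le[OF _ summable_expected_reward[OF assms(1-5)] sums_summable[OF geometric]])
      (simp add: mult_left_mono)
  also have "\<dots> = M / (1 - \<gamma>)"
    using sums_unique[OF geometric] by simp
  finally show ?thesis .
qed

lemma cmdp_optimal_feasible:
  "cmdp_optimal P \<gamma> \<rho> r c b \<pi> \<Longrightarrow> is_policy \<pi> \<and> b \<le> val P \<gamma> \<rho> \<pi> c"
  by (simp add: cmdp_optimal_def)

lemma cmdp_optimal_ge:
  "cmdp_optimal P \<gamma> \<rho> r c b \<pi> \<Longrightarrow> is_policy \<pi>' \<Longrightarrow> b \<le> val P \<gamma> \<rho> \<pi>' c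
    \<Longrightarrow> val P \<gamma> \<rho> \<pi>' r \<le> val P \<gamma> \<rho> \<pi> r"
  by (simp add: cmdp_optimal_def)

text \<open>The hypotheses on \<open>\<pi>\<^sub>c\<close> and \<open>\<zeta>\<close> only serve the convergence guarantee of the primal-dual
  algorithm.\<close>
theorem mainTheorem8:
  fixes P Phat :: "'s::finite \<Rightarrow> 'a::finite \<Rightarrow> 's \<Rightarrow> real"
    and r c \<xi> :: "'s \<Rightarrow> 'a \<Rightarrow> real"
    and \<rho> :: "'s \<Rightarrow> real"
    and \<gamma> b b' \<omega> \<zeta> \<epsilon> \<epsilon>opt :: real
    and \<pi>star \<pi>hatstar \<pi>c \<pi>bar :: "'s \<Rightarrow> 'a \<Rightarrow> real"
  assumes kP: "is_kernel P" and kPhat: "is_kernel Phat"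
    and rho: "is_dist \<rho>"
    and gam: "0 \<le> \<gamma>" "\<gamma> < 1"
    and r01: "\<And>s a. 0 \<le> r s a \<and> r s a \<le> 1"
    and c01: "\<And>s a. 0 \<le> c s a \<and> c s a \<le> 1"
    and xi: "\<And>s a. 0 \<le> \<xi> s a \<and> \<xi> s a \<le> \<omega>"
    and opt: "cmdp_optimal P \<gamma> \<rho> r c b \<pi>star"
    and eps: "\<epsilon>opt < \<epsilon>"
    and b': "b' = b - (\<epsilon> - \<epsilon>opt) / 2"
    and opthat: "cmdp_optimal Phat \<gamma> \<rho> (\<lambda>s a. r s a + \<xi> s a) c b' \<pi>hatstar"
    and optc: "mdp_optimal P \<gamma> \<rho> c \<pi>c"
    and zeta: "\<zeta> = val P \<gamma> \<rho> \<pi>c c - b"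
    and pbar: "is_policy \<pi>bar"
    and pbar_r: "val Phat \<gamma> \<rho> \<pi>bar (\<lambda>s a. r s a + \<xi> s a)
                   \<ge> val Phat \<gamma> \<rho> \<pi>hatstar (\<lambda>s a. r s a + \<xi> s a) - \<epsilon>opt"
    and pbar_c: "val Phat \<gamma> \<rho> \<pi>bar c \<ge> b' - \<epsilon>opt"
    and h1: "\<bar>val P \<gamma> \<rho> \<pi>bar c - val Phat \<gamma> \<rho> \<pi>bar c\<bar> \<le> (\<epsilon> - \<epsilon>opt) / 2"
    and h2: "\<bar>val P \<gamma> \<rho> \<pi>star c - val Phat \<gamma> \<rho> \<pi>star c\<bar> \<le> (\<epsilon> - \<epsilon>opt) / 2"
    and h3: "\<bar>val Phat \<gamma> \<rho> \<pi>c c - val P \<gamma> \<rho> \<pi>c c\<bar> \<le> \<zeta> / 4"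
  shows "val P \<gamma> \<rho> \<pi>bar c \<ge> b - \<epsilon>
       \<and> val P \<gamma> \<rho> \<pi>star r - val P \<gamma> \<rho> \<pi>bar r
           \<le> 2 * \<omega> / (1 - \<gamma>) + \<epsilon>opt
              + \<bar>val P \<gamma> \<rho> \<pi>star (\<lambda>s a. r s a + \<xi> s a) - val Phat \<gamma> \<rho> \<pi>star (\<lambda>s a. r s a + \<xi> s a)\<bar>
              + \<bar>val Phat \<gamma> \<rho> \<pi>bar (\<lambda>s a. r s a + \<xi> s a) - val P \<gamma> \<rho> \<pi>bar (\<lambda>s a. r s a + \<xi> s a)\<bar>"
proof -
  obtain pstar: "is_policy \<pi>star" and cstar: "b \<le> val P \<gamma> \<rho> \<pi>star c"
    using cmdp_optimal_feasible[OF opt] by blast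
  have "b' \<le> val Phat \<gamma> \<rho> \<pi>star c"
    using cstar abs_le_D1[OF h2] b' by linarith
  then have empirical_opt: "val Phat \<gamma> \<rho> \<pi>star (\<lambda>s a. r s a + \<xi> s a)
      \<le> val Phat \<gamma> \<rho> \<pi>hatstar (\<lambda>s a. r s a + \<xi> s a)"
    by (rule cmdp_optimal_ge[OF opthat pstar])
  have split_star: "val P \<gamma> \<rho> \<pi>star (\<lambda>s a. r s a + \<xi> s a) = val P \<gamma> \<rho> \<pi>star r + val P \<gamma> \<rho> \<pi>star \<xi>"
    and split_bar: "val P \<gamma> \<rho> \<pi>bar (\<lambda>s a. r s a + \<xi> s a) = val P \<gamma> \<rho> \<pi>bar r + val P \<gamma> \<rho> \<pi>bar \<xi>"
    using val_add[OF kP _ rho gam] pstar pbar by blast+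
  have "0 \<le> val P \<gamma> \<rho> \<pi>star \<xi>"
    using val_nonneg[OF kP pstar rho gam] xi by blast
  moreover have "val P \<gamma> \<rho> \<pi>bar \<xi> \<le> \<omega> / (1 - \<gamma>)"
    using val_le[OF kP pbar rho gam] xi by blast
  moreover have "0 \<le> \<omega> / (1 - \<gamma>)"
    using xi[of undefined undefined] gam by simp
  moreover have "val P \<gamma> \<rho> \<pi>bar c \<ge> b - \<epsilon>"
    using abs_le_D2[OF h1] pbar_c b' by (simp add: field_simps)
  ultimately show ?thesis
    using split_star split_bar empirical_opt pbar_r
      abs_ge_self[of "val P \<gamma> \<rho> \<pi>star (\<lambda>s a. r s a + \<xi> s a) - val Phat \<gamma> \<rho> \<pi>star (\<lambda>s a. r s a + \<xi> s a)"]
      abs_ge_self[of "val Phat \<gamma> \<rho> \<pi>bar (\<lambda>s a. r s a + \<xi> s a) - val P \<gamma> \<rho> \<pi>bar (\<lambda>s a. r s a + \<xi> s a)"]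
    by linarith
qed

end
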